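(* Let $x_{00},x_{10},x_{11},x_{01}\in\mathbb{RP}^3$ be the vertices of a planar quadrilateral with Laplace points $y^1$ (intersection of lines $x_{00}x_{10}$ and $x_{01}x_{11}$) and $y^2$ (intersection of lines $x_{00}x_{01}$ and $x_{10}x_{11}$). Let $p_0,p_1,q_0,q_1:[0,1]\to\mathbb{RP}^3$ be curves with $p_j(i)=q_i(j)=x_{ij}$ for $i,j\in\{0,1\}$, such that $p_0$ and $p_1$ are in perspective with respect to $y^2$ (i.e. $p_0(u),p_1(u),y^2$ are collinear for every $u$) and $q_0$ and $q_1$ are in perspective with respect to $y^1$ (i.e. $q_0(v),q_1(v),y^1$ are collinear for every $v$). Then there exists a unique projective translation surface patch $f:[0,1]^2\to\mathbb{RP}^3$ adapted to the quadrilateral such that $f(u,j)=p_j(u)$ for all $u\in[0,1]$, $j\in\{0,1\}$, and $f(i,v)=q_i(v)$ for all $v\in[0,1]$, $i\in\{0,1\}$.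
   Context: A parametrized surface patch $f:[0,1]^2\to\mathbb{RP}^3$ is a projective translation surface if there exist curves $\mathbf{p},\mathbf{q}:[0,1]\to\mathbb{R}^4$ with $f(u,v)=[\mathbf{p}(u)+\mathbf{q}(v)]$. Such a patch is adapted to a planar quadrilateral $x_{00},x_{10},x_{11},x_{01}$ if $f(i,j)=x_{ij}$ for $i,j\in\{0,1\}$. All data are assumed in general position. *)

theory Defs
  imports "HOL-Analysis.Analysis"
begin

typedef rp3 = "{L :: (real^4) set. \<exists>v. v \<noteq> 0 \<and> L = span {v}}"
  morphisms Rep_rp3 Abs_rp3
  by (rule exI[of _ "span {axis 1 1}"]) (simp, rule exI[of _ "axis 1 1"], simp add: axis_eq_0_iff)

definition pt :: "real^4 \<Rightarrow> rp3" where
  "pt v = Abs_rp3 (span {v})"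

definition proj_collinear :: "rp3 \<Rightarrow> rp3 \<Rightarrow> rp3 \<Rightarrow> bool" where
  "proj_collinear a b c \<longleftrightarrow> dim (Rep_rp3 a \<union> Rep_rp3 b \<union> Rep_rp3 c) \<le> 2"

definition proj_coplanar :: "rp3 \<Rightarrow> rp3 \<Rightarrow> rp3 \<Rightarrow> rp3 \<Rightarrow> bool" where
  "proj_coplanar a b c d \<longleftrightarrow>
     dim (Rep_rp3 a \<union> Rep_rp3 b \<union> Rep_rp3 c \<union> Rep_rp3 d) \<le> 3"

text \<open>Point z lies on the line joining a and b (for a = b this means z = a).\<close>
definition on_line :: "rp3 \<Rightarrow> rp3 \<Rightarrow> rp3 \<Rightarrow> bool" where
  "on_line z a b \<longleftrightarrow> Rep_rp3 z \<subseteq> span (Rep_rp3 a \<union> Rep_rp3 b)"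

definition proj_translation_patch :: "(real \<Rightarrow> real \<Rightarrow> rp3) \<Rightarrow> bool" where
  "proj_translation_patch f \<longleftrightarrow>
     (\<exists>p q :: real \<Rightarrow> real^4. \<forall>u\<in>{0..1}. \<forall>v\<in>{0..1}.
        p u + q v \<noteq> 0 \<and> f u v = pt (p u + q v))"

definition adapted ::
  "(real \<Rightarrow> real \<Rightarrow> rp3) \<Rightarrow> rp3 \<Rightarrow> rp3 \<Rightarrow> rp3 \<Rightarrow> rp3 \<Rightarrow> bool" where
  "adapted f x00 x10 x11 x01 \<longleftrightarrow>
     f 0 0 = x00 \<and> f 1 0 = x10 \<and> f 1 1 = x11 \<and> f 0 1 = x01"

end

theory Submission
  imports Defs
begin

text \<open>
  Lift the perspectivity centre \<open>y\<^sup>2\<close> to a vector \<open>z\<close>. Because \<open>p\<^sub>0(u)\<close>, \<open>p\<^sub>1(u)\<close> and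
  \<open>y\<^sup>2\<close> are distinct and collinear, \<open>p\<^sub>0(u)\<close> has exactly one representative \<open>p(u)\<close> such
  that \<open>p(u) + z\<close> represents \<open>p\<^sub>1(u)\<close>. The vector \<open>p(1) - p(0)\<close> lies on both lines
  \<open>x\<^sub>0\<^sub>0x\<^sub>1\<^sub>0\<close> and \<open>x\<^sub>0\<^sub>1x\<^sub>1\<^sub>1\<close>, so it represents \<open>y\<^sup>1\<close>, and the same construction for
  \<open>q\<^sub>0, q\<^sub>1\<close> with respect to it gives \<open>q(v)\<close> with \<open>q(0) = 0\<close>, \<open>q(1) = z\<close>; the patch is
  \<open>[p(u) + q(v)]\<close>. Conversely, for any translation patch \<open>[p'(u) + q'(v)]\<close> with the same
  boundary, \<open>q'(1) - q'(0)\<close> and \<open>p'(1) - p'(0)\<close> again represent \<open>y\<^sup>2\<close> and \<open>y\<^sup>1\<close>, and the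
  uniqueness of these representatives forces \<open>p' + q'\<close> to be a constant multiple of \<open>p + q\<close>.
\<close>

lemma span_Un_span_singletons:
  "span (span {a} \<union> span {b}) = span {a, b}"
  "span (span {a} \<union> span {b} \<union> span {c}) = span {a, b, c}"
  by (auto simp: span_eq intro: span_base span_superset[THEN subsetD]
      elim: span_mono[THEN subsetD, rotated])

lemma in_span_pair_iff: "x \<in> span {a, b} \<longleftrightarrow> (\<exists>s t. x = s *\<^sub>R a + t *\<^sub>R b)"
proof
  assume "x \<in> span {a, b}"
  then obtain s t where "x - s *\<^sub>R a = t *\<^sub>R b"
    by (auto simp: span_breakdown_eq span_singleton)
  then have "x = s *\<^sub>R a + t *\<^sub>R b"
    by (simp add: algebra_simps)
  then show "\<exists>s t. x = s *\<^sub>R a + t *\<^sub>R b" by blast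
qed (auto intro: span_add span_scale span_base)

lemma span_scaleR_iff: "k \<noteq> 0 \<Longrightarrow> k *\<^sub>R x \<in> span S \<longleftrightarrow> x \<in> span S"
  using span_scale[of "k *\<^sub>R x" S "inverse k"] by (auto intro: span_scale)

lemma span_pairs_Int_parallel:
  assumes c: "c \<notin> span {a, b}"
    and y: "y \<in> span {a, b}" "y \<in> span {c, d}"
    and y': "y' \<in> span {a, b}" "y' \<in> span {c, d}" "y' \<noteq> 0"
  shows "\<exists>k. y = k *\<^sub>R y'"
proof -
  obtain \<gamma> \<delta> \<gamma>' \<delta>' where
    yc: "y = \<gamma> *\<^sub>R c + \<delta> *\<^sub>R d" and y'c: "y' = \<gamma>' *\<^sub>R c + \<delta>' *\<^sub>R d"
    using y(2) y'(2) by (auto simp: in_span_pair_iff)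
  have "\<delta>' \<noteq> 0"
  proof
    assume "\<delta>' = 0"
    then have "\<gamma>' *\<^sub>R c \<in> span {a, b}" "\<gamma>' \<noteq> 0"
      using y'c y' by auto
    then show False
      using c span_scaleR_iff by blast
  qed
  have diff: "\<delta>' *\<^sub>R y - \<delta> *\<^sub>R y' = (\<delta>' * \<gamma> - \<delta> * \<gamma>') *\<^sub>R c"
    unfolding yc y'c by (simp add: algebra_simps)
  moreover have "\<delta>' *\<^sub>R y - \<delta> *\<^sub>R y' \<in> span {a, b}"
    using y y' by (intro span_diff span_scale)
  ultimately have "\<delta>' * \<gamma> - \<delta> * \<gamma>' = 0"
    using c span_scaleR_iff by metis
  then have "\<delta>' *\<^sub>R y = \<delta> *\<^sub>R y'"
    using diff by simp
  then have "y = (\<delta> / \<delta>') *\<^sub>R y'"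
    using \<open>\<delta>' \<noteq> 0\<close> by (metis divide_inverse_commute scaleR_scaleR scaleR_one left_inverse)
  then show ?thesis ..
qed

lemma Rep_rp3_pt: "v \<noteq> 0 \<Longrightarrow> Rep_rp3 (pt v) = span {v}"
  unfolding pt_def by (rule Abs_rp3_inverse) auto

lemma pt_cases:
  obtains v where "v \<noteq> 0" "x = pt v"
proof -
  obtain v where "v \<noteq> 0" "Rep_rp3 x = span {v}" using Rep_rp3[of x] by auto
  then show thesis using that Rep_rp3_pt by (metis Rep_rp3_inject)
qed

lemma pt_eq_pt_iff:
  assumes "v \<noteq> 0" "w \<noteq> 0"
  shows "pt v = pt w \<longleftrightarrow> (\<exists>c. v = c *\<^sub>R w)"
proof -
  have "pt v = pt w \<longleftrightarrow> span {v} = span {w}"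
    using assms by (metis Rep_rp3_inject Rep_rp3_pt)
  also have "\<dots> \<longleftrightarrow> v \<in> span {w} \<and> w \<in> span {v}"
    by (simp add: span_eq)
  also have "\<dots> \<longleftrightarrow> (\<exists>c. v = c *\<^sub>R w)"
  proof (intro iffI conjI)
    assume "\<exists>c. v = c *\<^sub>R w"
    then obtain c where c: "v = c *\<^sub>R w" ..
    with assms have "w = (1 / c) *\<^sub>R v" by auto
    then show "w \<in> span {v}" by (metis span_base span_scale singletonI)
    show "v \<in> span {w}" using c by (simp add: span_base span_scale)
  qed (auto simp: span_singleton)
  finally show ?thesis .
qed

lemma pt_scaleR [simp]: "c \<noteq> 0 \<Longrightarrow> pt (c *\<^sub>R v) = pt v"
  by (cases "v = 0") (auto simp: pt_eq_pt_iff)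

lemma pt_uminus [simp]: "pt (- v) = pt v"
  using pt_scaleR[of "- 1" v] by simp

lemma on_line_pt_iff:
  "z \<noteq> 0 \<Longrightarrow> a \<noteq> 0 \<Longrightarrow> b \<noteq> 0 \<Longrightarrow> on_line (pt z) (pt a) (pt b) \<longleftrightarrow> z \<in> span {a, b}"
  unfolding on_line_def
  using span_minimal[of "{z}" "span {a, b}"]
  by (auto simp: Rep_rp3_pt span_Un_span_singletons intro: span_base)

lemma proj_collinear_pt_iff:
  "a \<noteq> 0 \<Longrightarrow> b \<noteq> 0 \<Longrightarrow> c \<noteq> 0 \<Longrightarrow> proj_collinear (pt a) (pt b) (pt c) \<longleftrightarrow> dim {a, b, c} \<le> 2"
  unfolding proj_collinear_def
  by (metis Rep_rp3_pt dim_span span_Un_span_singletons(2))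

lemma proj_collinear_swap12: "proj_collinear b a c \<longleftrightarrow> proj_collinear a b c"
  unfolding proj_collinear_def by (simp add: Un_commute)

lemma proj_collinear_swap23: "proj_collinear a c b \<longleftrightarrow> proj_collinear a b c"
  unfolding proj_collinear_def by (simp add: Un_ac)

lemma proj_collinear_pt_if_in_span:
  assumes "a \<noteq> 0" "b \<noteq> 0" "c \<noteq> 0" "c \<in> span {a, b}"
  shows "proj_collinear (pt a) (pt b) (pt c)"
proof -
  have "dim {a, b, c} \<le> card {a, b}"
    using assms(4) by (intro dim_le_card) (auto intro: span_base)
  also have "\<dots> \<le> 2"
    by (simp add: card_insert_le_m1)
  finally show ?thesis
    using assms by (simp add: proj_collinear_pt_iff)
qed

lemma proj_collinear_repeat: "proj_collinear a b b"
proof -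
  obtain va where "va \<noteq> 0" "a = pt va" by (rule pt_cases)
  moreover obtain vb where "vb \<noteq> 0" "b = pt vb" by (rule pt_cases)
  moreover have "vb \<in> span {va, vb}"
    by (simp add: span_base)
  ultimately show ?thesis
    using proj_collinear_pt_if_in_span by blast
qed

lemma proj_collinear_repeat_left: "proj_collinear a a b"
  using proj_collinear_repeat[of b a] unfolding proj_collinear_def by (simp add: Un_ac)

lemma in_span_if_proj_collinear_pt:
  assumes "a \<noteq> 0" "b \<noteq> 0" "c \<noteq> 0" "pt a \<noteq> pt b"
    and "proj_collinear (pt a) (pt b) (pt c)"
  shows "c \<in> span {a, b}"
proof (rule ccontr)
  assume c: "c \<notin> span {a, b}"
  have "a \<notin> span {b}"
    using assms by (auto simp: span_singleton pt_eq_pt_iff)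
  then have "independent (insert c {a, b})"
    using assms c by (intro independent_insertI) (auto simp: independent_empty)
  then have "independent {a, b, c}"
    by (simp add: insert_commute)
  moreover have "a \<noteq> b" "c \<noteq> a" "c \<noteq> b"
    using assms(4) c span_base[of _ "{a, b}"] by auto
  then have "card {a, b, c} = 3"
    by simp
  ultimately have "dim {a, b, c} = 3"
    by (simp add: dim_eq_card_independent)
  then show False
    using assms by (simp add: proj_collinear_pt_iff)
qed

lemma on_line_inter_unique:
  assumes "\<not> proj_collinear a b c"
    and "on_line y a b" "on_line y c d" "on_line y' a b" "on_line y' c d"
  shows "y = y'"
proof -
  obtain va where "va \<noteq> 0" "a = pt va" by (rule pt_cases)
  obtain vb where "vb \<noteq> 0" "b = pt vb" by (rule pt_cases)
  obtain vc where "vc \<noteq> 0" "c = pt vc" by (rule pt_cases)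
  obtain vd where "vd \<noteq> 0" "d = pt vd" by (rule pt_cases)
  obtain vy where "vy \<noteq> 0" "y = pt vy" by (rule pt_cases)
  obtain vy' where "vy' \<noteq> 0" "y' = pt vy'" by (rule pt_cases)
  note nz = \<open>va \<noteq> 0\<close> \<open>vb \<noteq> 0\<close> \<open>vc \<noteq> 0\<close> \<open>vd \<noteq> 0\<close> \<open>vy \<noteq> 0\<close> \<open>vy' \<noteq> 0\<close>
    and pts = \<open>a = pt va\<close> \<open>b = pt vb\<close> \<open>c = pt vc\<close> \<open>d = pt vd\<close> \<open>y = pt vy\<close> \<open>y' = pt vy'\<close>
  have "vc \<notin> span {va, vb}"
    using assms(1) nz proj_collinear_pt_if_in_span pts by blast
  moreover have "vy \<in> span {va, vb}" "vy \<in> span {vc, vd}" "vy' \<in> span {va, vb}" "vy' \<in> span {vc, vd}"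
    using assms(2-) nz by (simp_all add: pts on_line_pt_iff)
  ultimately obtain k where "vy = k *\<^sub>R vy'"
    using span_pairs_Int_parallel nz(6) by blast
  then show ?thesis
    using nz pts pt_eq_pt_iff by blast
qed

definition lifts_pair :: "real^4 \<Rightarrow> rp3 \<Rightarrow> rp3 \<Rightarrow> real^4 \<Rightarrow> bool" where
  "lifts_pair z A B v \<longleftrightarrow> v \<noteq> 0 \<and> v + z \<noteq> 0 \<and> pt v = A \<and> pt (v + z) = B"

lemma lifts_pair_scaleR:
  "lifts_pair z A B v \<Longrightarrow> c \<noteq> 0 \<Longrightarrow> lifts_pair (c *\<^sub>R z) A B (c *\<^sub>R v)"
  unfolding lifts_pair_def by (metis pt_scaleR scaleR_eq_0_iff scaleR_right_distrib)

lemma ex_lifts_pair: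
  assumes "z \<noteq> 0" "proj_collinear A B (pt z)" "A \<noteq> B" "A \<noteq> pt z" "B \<noteq> pt z"
  shows "\<exists>v. lifts_pair z A B v"
proof -
  obtain a where a: "a \<noteq> 0" "A = pt a" by (rule pt_cases)
  obtain b where b: "b \<noteq> 0" "B = pt b" by (rule pt_cases)
  have "z \<in> span {a, b}"
    using assms a b by (intro in_span_if_proj_collinear_pt) auto
  then obtain s t where z: "z = s *\<^sub>R a + t *\<^sub>R b"
    by (auto simp: in_span_pair_iff)
  have "s \<noteq> 0"
  proof
    assume "s = 0"
    then have "t \<noteq> 0" "pt z = B" using z assms(1) a b by auto
    then show False using assms(5) by simp
  qed
  have "t \<noteq> 0"
  proof
    assume "t = 0"
    then have "pt z = A" using z assms(1) a b \<open>s \<noteq> 0\<close> by auto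
    then show False using assms(4) by simp
  qed
  then have "lifts_pair z A B ((- s) *\<^sub>R a)"
    using \<open>s \<noteq> 0\<close> a b z by (simp add: lifts_pair_def)
  then show ?thesis ..
qed

lemma lifts_pair_unique:
  assumes "lifts_pair z A B v" "lifts_pair z A B w" "z \<noteq> 0" "pt z \<noteq> A"
  shows "v = w"
proof -
  obtain c e where c: "v = c *\<^sub>R w" and e: "v + z = e *\<^sub>R (w + z)"
    using assms(1,2) pt_eq_pt_iff unfolding lifts_pair_def by metis
  have "(e - 1) *\<^sub>R z = (c - e) *\<^sub>R w"
    using e unfolding c by (simp add: algebra_simps)
  have "e = 1"
  proof (rule ccontr)
    assume "e \<noteq> 1"
    then have "z = (1 / (e - 1)) *\<^sub>R ((e - 1) *\<^sub>R z)"
      by simp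
    also have "\<dots> = ((c - e) / (e - 1)) *\<^sub>R w"
      unfolding \<open>(e - 1) *\<^sub>R z = (c - e) *\<^sub>R w\<close> by simp
    finally have "z = ((c - e) / (e - 1)) *\<^sub>R w" .
    then have "pt z = pt w"
      using assms(2,3) pt_eq_pt_iff unfolding lifts_pair_def by blast
    then show False
      using assms(2,4) unfolding lifts_pair_def by simp
  qed
  then have "(c - 1) *\<^sub>R w = 0"
    using \<open>(e - 1) *\<^sub>R z = (c - e) *\<^sub>R w\<close> by simp
  then show ?thesis
    using assms(2) c unfolding lifts_pair_def by simp
qed

lemma perspective_curves_lift:
  assumes "z \<noteq> 0"
    and "\<forall>u\<in>S. proj_collinear (A u) (B u) (pt z)"
    and "\<forall>u\<in>S. A u \<noteq> B u \<and> A u \<noteq> pt z \<and> B u \<noteq> pt z"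
  shows "\<exists>p. \<forall>u\<in>S. lifts_pair z (A u) (B u) (p u)"
  using assms by (intro bchoice ballI ex_lifts_pair) auto

definition translation_lift ::
    "(real \<Rightarrow> real^4) \<Rightarrow> (real \<Rightarrow> real^4) \<Rightarrow> (real \<Rightarrow> real \<Rightarrow> rp3) \<Rightarrow> bool" where
  "translation_lift p q f \<longleftrightarrow>
     (\<forall>u\<in>{0..1}. \<forall>v\<in>{0..1}. p u + q v \<noteq> 0 \<and> f u v = pt (p u + q v))"

lemma proj_translation_patch_iff: "proj_translation_patch f \<longleftrightarrow> (\<exists>p q. translation_lift p q f)"
  unfolding proj_translation_patch_def translation_lift_def ..

lemma translation_lift_transpose: "translation_lift p q f \<Longrightarrow> translation_lift q p (\<lambda>v u. f u v)"
  unfolding translation_lift_def by (simp add: add.commute)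

lemma translation_patch_of_lifts:
  assumes p: "\<forall>u\<in>{0..1}. lifts_pair z (p0 u) (p1 u) (p u)"
    and r: "\<forall>v\<in>{0..1}. lifts_pair (p 1 - p 0) (q0 v) (q1 v) (r v)"
    and r_ends: "r 0 = p 0" "r 1 = p 0 + z"
    and nondeg: "\<forall>u\<in>{0..1}. \<forall>v\<in>{0..1}.
                   \<not> (on_line (q0 v) (p0 0) (p0 u) \<and> on_line (q0 v) (p1 0) (p1 u))"
  shows "\<exists>f. proj_translation_patch f \<and>
             (\<forall>u\<in>{0..1}. f u 0 = p0 u \<and> f u 1 = p1 u) \<and>
             (\<forall>v\<in>{0..1}. f 0 v = q0 v \<and> f 1 v = q1 v)"
proof (intro exI conjI)
  define q where "q v = r v - p 0" for v
  have "p u + q v \<noteq> 0" if u: "u \<in> {0..1}" and v: "v \<in> {0..1}" for u v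
  proof
    assume "p u + q v = 0"
    then have rv: "r v = 1 *\<^sub>R p 0 + (- 1) *\<^sub>R p u" "r v = 1 *\<^sub>R (p 0 + z) + (- 1) *\<^sub>R (p u + z)"
      unfolding q_def by (simp_all add: algebra_simps)
    have "lifts_pair z (p0 0) (p1 0) (p 0)" "lifts_pair z (p0 u) (p1 u) (p u)"
      using p u by auto
    moreover have "lifts_pair (p 1 - p 0) (q0 v) (q1 v) (r v)"
      using r v by blast
    moreover have "r v \<in> span {p 0, p u}" "r v \<in> span {p 0 + z, p u + z}"
      using rv in_span_pair_iff by blast+
    ultimately have "on_line (q0 v) (p0 0) (p0 u)" "on_line (q0 v) (p1 0) (p1 u)"
      unfolding lifts_pair_def by (metis on_line_pt_iff)+
    then show False
      using nondeg u v by blast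
  qed
  then show "proj_translation_patch (\<lambda>u v. pt (p u + q v))"
    unfolding proj_translation_patch_def by blast
  show "\<forall>u\<in>{0..1}. pt (p u + q 0) = p0 u \<and> pt (p u + q 1) = p1 u"
    using p r_ends unfolding q_def lifts_pair_def by simp
  show "\<forall>v\<in>{0..1}. pt (p 0 + q v) = q0 v \<and> pt (p 1 + q v) = q1 v"
    using r unfolding q_def lifts_pair_def by (simp add: algebra_simps)
qed

lemma translation_patch_exists:
  assumes quad: "\<not> proj_collinear x01 x00 x10"
    and y1: "on_line y1 x00 x10" "on_line y1 x01 x11"
    and ends: "p0 0 = x00" "p0 1 = x10" "p1 0 = x01" "p1 1 = x11"
              "q0 0 = x00" "q0 1 = x01" "q1 0 = x10" "q1 1 = x11"
    and persp_p: "\<forall>u\<in>{0..1}. proj_collinear (p0 u) (p1 u) y2"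
    and persp_q: "\<forall>v\<in>{0..1}. proj_collinear (q0 v) (q1 v) y1"
    and gp_p: "\<forall>u\<in>{0..1}. p0 u \<noteq> p1 u \<and> p0 u \<noteq> y2 \<and> p1 u \<noteq> y2"
    and gp_q: "\<forall>v\<in>{0..1}. q0 v \<noteq> q1 v \<and> q0 v \<noteq> y1 \<and> q1 v \<noteq> y1"
    and nondeg: "\<forall>u\<in>{0..1}. \<forall>v\<in>{0..1}.
                   \<not> (on_line (q0 v) x00 (p0 u) \<and> on_line (q0 v) x01 (p1 u))"
  shows "\<exists>f. proj_translation_patch f \<and>
             (\<forall>u\<in>{0..1}. f u 0 = p0 u \<and> f u 1 = p1 u) \<and>
             (\<forall>v\<in>{0..1}. f 0 v = q0 v \<and> f 1 v = q1 v)"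
proof -
  obtain z where z: "z \<noteq> 0" "y2 = pt z" by (rule pt_cases)
  then obtain p where p: "\<forall>u\<in>{0..1}. lifts_pair z (p0 u) (p1 u) (p u)"
    using perspective_curves_lift persp_p gp_p by metis
  have p_ends: "lifts_pair z x00 x01 (p 0)" "lifts_pair z x10 x11 (p 1)"
    using p ends by force+
  define d where "d = p 1 - p 0"
  have "x00 \<noteq> x10"
    using quad proj_collinear_repeat by metis
  then have "d \<noteq> 0"
    using p_ends unfolding d_def lifts_pair_def by auto
  have "d = (- 1) *\<^sub>R p 0 + 1 *\<^sub>R p 1" "d = (- 1) *\<^sub>R (p 0 + z) + 1 *\<^sub>R (p 1 + z)"
    unfolding d_def by simp_all
  then have "on_line (pt d) x00 x10" "on_line (pt d) x01 x11"
    using p_ends \<open>d \<noteq> 0\<close> unfolding lifts_pair_def by (metis in_span_pair_iff on_line_pt_iff)+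
  moreover have "\<not> proj_collinear x00 x10 x01"
    using quad by (simp add: proj_collinear_swap12 proj_collinear_swap23)
  ultimately have "pt d = y1"
    using y1 on_line_inter_unique by blast
  then obtain r where r: "\<forall>v\<in>{0..1}. lifts_pair d (q0 v) (q1 v) (r v)"
    using perspective_curves_lift persp_q gp_q \<open>d \<noteq> 0\<close> by metis
  have "lifts_pair d x00 x10 (p 0)" "lifts_pair d x01 x11 (p 0 + z)"
    using p_ends unfolding d_def lifts_pair_def by (simp_all add: algebra_simps)
  moreover have "lifts_pair d x00 x10 (r 0)" "lifts_pair d x01 x11 (r 1)"
    using r[rule_format, of 0] r[rule_format, of 1] ends by simp_all
  moreover have "pt d \<noteq> x00" "pt d \<noteq> x01"
    using gp_q ends \<open>pt d = y1\<close> by force+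
  ultimately have "r 0 = p 0" "r 1 = p 0 + z"
    using lifts_pair_unique \<open>d \<noteq> 0\<close> by metis+
  then show ?thesis
    using translation_patch_of_lifts[OF p r[unfolded d_def]] nondeg ends by simp
qed

lemma translation_lift_column_difference:
  assumes f: "translation_lift p q f"
    and quad: "\<not> proj_collinear (f 0 1) (f 0 0) (f 1 0)"
    and y: "on_line y (f 0 0) (f 0 1)" "on_line y (f 1 0) (f 1 1)"
  shows "q 1 - q 0 \<noteq> 0" "pt (q 1 - q 0) = y"
proof -
  have nz: "p i + q j \<noteq> 0" and val: "f i j = pt (p i + q j)" if "i \<in> {0, 1}" "j \<in> {0, 1}" for i j
    using f that unfolding translation_lift_def by auto
  have "f 0 0 \<noteq> f 0 1"
    using quad proj_collinear_repeat_left by metis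
  then show "q 1 - q 0 \<noteq> 0"
    using val by auto
  have "q 1 - q 0 \<in> span {p i + q 0, p i + q 1}" for i
    unfolding in_span_pair_iff by (intro exI[of _ "- 1"] exI[of _ 1]) simp
  then have "on_line (pt (q 1 - q 0)) (f 0 0) (f 0 1)" "on_line (pt (q 1 - q 0)) (f 1 0) (f 1 1)"
    using \<open>q 1 - q 0 \<noteq> 0\<close> by (simp_all add: nz val on_line_pt_iff)
  moreover have "\<not> proj_collinear (f 0 0) (f 0 1) (f 1 0)"
    using quad by (simp add: proj_collinear_swap12)
  ultimately show "pt (q 1 - q 0) = y"
    using y on_line_inter_unique by blast
qed

lemma translation_lift_rows_proportional:
  assumes f: "translation_lift p q f" and g: "translation_lift p' q' g"
    and fg: "\<forall>u\<in>{0..1}. g u 0 = f u 0 \<and> g u 1 = f u 1"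
    and m: "q 1 - q 0 = m *\<^sub>R (q' 1 - q' 0)" "m \<noteq> 0" "q 1 - q 0 \<noteq> 0"
    and centre: "\<forall>u\<in>{0..1}. f u 0 \<noteq> pt (q 1 - q 0)"
  shows "\<forall>u\<in>{0..1}. p u + q 0 = m *\<^sub>R (p' u + q' 0)"
proof
  fix u :: real
  assume u: "u \<in> {0..1}"
  have "lifts_pair (q 1 - q 0) (f u 0) (f u 1) (p u + q 0)"
    using f u unfolding translation_lift_def lifts_pair_def by simp
  moreover have "lifts_pair (q' 1 - q' 0) (f u 0) (f u 1) (p' u + q' 0)"
    using g fg u unfolding translation_lift_def lifts_pair_def by simp
  then have "lifts_pair (q 1 - q 0) (f u 0) (f u 1) (m *\<^sub>R (p' u + q' 0))"
    unfolding m(1) using m(2) by (rule lifts_pair_scaleR)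
  ultimately show "p u + q 0 = m *\<^sub>R (p' u + q' 0)"
    using lifts_pair_unique m(3) centre u by metis
qed

lemma translation_patch_unique:
  assumes f: "proj_translation_patch f" and g: "proj_translation_patch g"
    and rows: "\<forall>u\<in>{0..1}. g u 0 = f u 0 \<and> g u 1 = f u 1"
    and cols: "\<forall>v\<in>{0..1}. g 0 v = f 0 v \<and> g 1 v = f 1 v"
    and quad: "\<not> proj_collinear (f 0 1) (f 0 0) (f 1 0)"
    and y1: "on_line y1 (f 0 0) (f 1 0)" "on_line y1 (f 0 1) (f 1 1)"
    and y2: "on_line y2 (f 0 0) (f 0 1)" "on_line y2 (f 1 0) (f 1 1)"
    and gp: "\<forall>u\<in>{0..1}. f u 0 \<noteq> y2" "\<forall>v\<in>{0..1}. f 0 v \<noteq> y1"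
  shows "\<forall>u\<in>{0..1}. \<forall>v\<in>{0..1}. g u v = f u v"
proof -
  obtain p q p' q' where pq: "translation_lift p q f" and pq': "translation_lift p' q' g"
    using f g by (meson proj_translation_patch_iff)
  have corners: "g 0 0 = f 0 0" "g 0 1 = f 0 1" "g 1 0 = f 1 0" "g 1 1 = f 1 1"
    using rows by auto
  have quad': "\<not> proj_collinear (f 1 0) (f 0 0) (f 0 1)"
    using quad by (metis proj_collinear_swap12 proj_collinear_swap23)
  note column = translation_lift_column_difference
  note row = translation_lift_column_difference[OF translation_lift_transpose]
  obtain m where m: "q 1 - q 0 = m *\<^sub>R (q' 1 - q' 0)"
    using column[OF pq quad y2] column[OF pq' _ y2[folded corners]] quad[folded corners]
    by (metis pt_eq_pt_iff)
  have "q 1 - q 0 \<noteq> 0" "m \<noteq> 0"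
    using column[OF pq quad y2] m by auto
  then have row_lifts: "\<forall>u\<in>{0..1}. p u + q 0 = m *\<^sub>R (p' u + q' 0)"
    using translation_lift_rows_proportional[OF pq pq' rows m] column[OF pq quad y2] gp(1)
    by simp
  have "p 1 - p 0 = (p 1 + q 0) - (p 0 + q 0)"
    by simp
  also have "\<dots> = m *\<^sub>R (p' 1 + q' 0) - m *\<^sub>R (p' 0 + q' 0)"
    using row_lifts by simp
  also have "\<dots> = m *\<^sub>R (p' 1 - p' 0)"
    by (simp add: algebra_simps)
  finally have col_lifts: "\<forall>v\<in>{0..1}. q v + p 0 = m *\<^sub>R (q' v + p' 0)"
    using translation_lift_rows_proportional[OF translation_lift_transpose[OF pq]
        translation_lift_transpose[OF pq'] _ _ \<open>m \<noteq> 0\<close>]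
      row[OF pq quad' y1] cols gp(2)
    by simp
  show ?thesis
  proof (intro ballI)
    fix u v :: real
    assume u: "u \<in> {0..1}" and v: "v \<in> {0..1}"
    have "p u + q v = (p u + q 0) + (q v + p 0) - (p 0 + q 0)"
      by simp
    also have "\<dots> = m *\<^sub>R (p' u + q' 0) + m *\<^sub>R (q' v + p' 0) - m *\<^sub>R (p' 0 + q' 0)"
      using row_lifts col_lifts u v by simp
    also have "\<dots> = m *\<^sub>R (p' u + q' v)"
      by (simp add: algebra_simps)
    finally show "g u v = f u v"
      using pq pq' \<open>m \<noteq> 0\<close> u v unfolding translation_lift_def by simp
  qed
qed

theorem lemma4p3:
  fixes x00 x10 x11 x01 y1 y2 :: rp3
    and p0 p1 q0 q1 :: "real \<Rightarrow> rp3"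
  assumes planar: "proj_coplanar x00 x10 x11 x01"
    and gp_quad: "\<not> proj_collinear x00 x10 x11" "\<not> proj_collinear x10 x11 x01"
                 "\<not> proj_collinear x11 x01 x00" "\<not> proj_collinear x01 x00 x10"
    and y1: "on_line y1 x00 x10" "on_line y1 x01 x11"
    and y2: "on_line y2 x00 x01" "on_line y2 x10 x11"
    and ends: "p0 0 = x00" "p0 1 = x10" "p1 0 = x01" "p1 1 = x11"
              "q0 0 = x00" "q0 1 = x01" "q1 0 = x10" "q1 1 = x11"
    and persp_p: "\<forall>u\<in>{0..1}. proj_collinear (p0 u) (p1 u) y2"
    and persp_q: "\<forall>v\<in>{0..1}. proj_collinear (q0 v) (q1 v) y1"
    and gp_p: "\<forall>u\<in>{0..1}. p0 u \<noteq> p1 u \<and> p0 u \<noteq> y2 \<and> p1 u \<noteq> y2"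
    and gp_q: "\<forall>v\<in>{0..1}. q0 v \<noteq> q1 v \<and> q0 v \<noteq> y1 \<and> q1 v \<noteq> y1"
    and gp_nondeg: "\<forall>u\<in>{0..1}. \<forall>v\<in>{0..1}.
                      \<not> (on_line (q0 v) x00 (p0 u) \<and> on_line (q0 v) x01 (p1 u))"
  shows "\<exists>f. proj_translation_patch f \<and> adapted f x00 x10 x11 x01 \<and>
             (\<forall>u\<in>{0..1}. f u 0 = p0 u \<and> f u 1 = p1 u) \<and>
             (\<forall>v\<in>{0..1}. f 0 v = q0 v \<and> f 1 v = q1 v) \<and>
             (\<forall>g. proj_translation_patch g \<and> adapted g x00 x10 x11 x01 \<and>
                  (\<forall>u\<in>{0..1}. g u 0 = p0 u \<and> g u 1 = p1 u) \<and>
                  (\<forall>v\<in>{0..1}. g 0 v = q0 v \<and> g 1 v = q1 v)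
                  \<longrightarrow> (\<forall>u\<in>{0..1}. \<forall>v\<in>{0..1}. g u v = f u v))"
proof -
  obtain f where f: "proj_translation_patch f"
      "\<forall>u\<in>{0..1}. f u 0 = p0 u \<and> f u 1 = p1 u" "\<forall>v\<in>{0..1}. f 0 v = q0 v \<and> f 1 v = q1 v"
    using translation_patch_exists[OF gp_quad(4) y1 ends persp_p persp_q gp_p gp_q gp_nondeg]
    by blast
  have corners: "f 0 0 = x00" "f 1 0 = x10" "f 1 1 = x11" "f 0 1 = x01"
    using f(2) ends by auto
  have "\<forall>u\<in>{0..1}. \<forall>v\<in>{0..1}. g u v = f u v"
    if "proj_translation_patch g" "\<forall>u\<in>{0..1}. g u 0 = p0 u \<and> g u 1 = p1 u"
      "\<forall>v\<in>{0..1}. g 0 v = q0 v \<and> g 1 v = q1 v" for g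
    using translation_patch_unique[OF f(1) that(1)] that(2,3) f(2,3) gp_quad(4) y1 y2 gp_p gp_q
    unfolding corners by auto
  then show ?thesis
    using f corners unfolding adapted_def by blast
qed

end
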